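(* Let $n\ge 3$ and let $H_{2n}(t)=\sum_{k\ge 0}\dim_{\mathbb C}\big(\mathbb{C}\langle u,v\rangle^{D_{2n}}\big)^{(k)}t^k$ be the Hilbert series of the algebra of invariants of $D_{2n}$ acting on $\mathbb{C}\langle u,v\rangle$ as described in the context. Then: (i) if $n=2m+1$ is odd, $m\ge 1$, \[ H_{2n}(t)=\frac{1}{2}+\frac{1}{2n(1-2t)}+\frac{1}{n}\sum_{k=1}^{m}\frac{1}{1-2\cos\left(\frac{2k\pi}{n}\right)t}; \] (ii) if $n=2m+2$ is even, $m\ge 1$, \[ H_{2n}(t)=\frac{1}{2}+\frac{1}{2n(1-2t)}+\frac{1}{2n(1+2t)}+\frac{1}{n}\sum_{k=1}^{m}\frac{1}{1-2\cos\left(\frac{2k\pi}{n}\right)t}. \]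
   Context: $\mathbb{C}\langle u,v\rangle$ is the free associative unital algebra over $\mathbb C$ on two noncommuting variables $u,v$, graded by total degree; $(\cdot)^{(k)}$ denotes the homogeneous component of degree $k$. The dihedral group $D_{2n}=\langle\rho,\tau\mid \rho^n=\tau^2=(\tau\rho)^2=1\rangle$ of order $2n$ acts linearly on the span of $u,v$ by $\rho(u)=\xi u$, $\rho(v)=\xi^{-1}v$, $\tau(u)=v$, $\tau(v)=u$, where $\xi=e^{2\pi i/n}$, and this action is extended to $\mathbb{C}\langle u,v\rangle$ by algebra automorphisms: $g(f(u,v))=f(g(u),g(v))$. $\mathbb{C}\langle u,v\rangle^{D_{2n}}$ is the subalgebra of elements fixed by all $g\in D_{2n}$. *)

theory Defs
  imports Complex_Main "HOL-Library.Function_Algebras" "HOL-Computational_Algebra.Formal_Power_Series"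
begin

text \<open>An element of C<u,v> is represented by its
  coefficient function on words (lists of letters); the degree-k component consists of
  the coefficient functions supported on words of length k.\<close>
datatype letter = U | V

text \<open>A linear map g on span(u,v) is given by a matrix M, where M y x is the
  coefficient of the letter y in g(x).\<close>
type_synonym lmap = "letter \<Rightarrow> letter \<Rightarrow> complex"

definition mmult :: "lmap \<Rightarrow> lmap \<Rightarrow> lmap" where
  "mmult A B = (\<lambda>y x. A y U * B U x + A y V * B V x)"

definition lid :: lmap where
  "lid = (\<lambda>y x. if y = x then 1 else 0)"

definition rho :: "nat \<Rightarrow> lmap" where
  "rho n = (\<lambda>y x. if y = x then (if x = U then cis (2 * pi / real n) else cis (- (2 * pi / real n))) else 0)"

definition tau :: lmap where
  "tau = (\<lambda>y x. if y = x then 0 else 1)"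

text \<open>The image of D_{2n} acting on span(u,v): the group generated by rho and tau
  (finite, so closure under multiplication suffices).\<close>
inductive_set dihedral :: "nat \<Rightarrow> lmap set" for n where
  one: "lid \<in> dihedral n"
| mult_rho: "g \<in> dihedral n \<Longrightarrow> mmult (rho n) g \<in> dihedral n"
| mult_tau: "g \<in> dihedral n \<Longrightarrow> mmult tau g \<in> dihedral n"

text \<open>Action of a linear substitution g on C<u,v> extended as algebra automorphism:
  g(x_1...x_k) = g(x_1)...g(x_k), written on coefficient functions.\<close>
definition act :: "lmap \<Rightarrow> (letter list \<Rightarrow> complex) \<Rightarrow> (letter list \<Rightarrow> complex)" where
  "act M f = (\<lambda>w'. \<Sum>w\<in>{w. length w = length w'}. f w * (\<Prod>i<length w'. M (w' ! i) (w ! i)))"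

definition homog :: "nat \<Rightarrow> (letter list \<Rightarrow> complex) set" where
  "homog k = {f. \<forall>w. length w \<noteq> k \<longrightarrow> f w = 0}"

definition inv_component :: "nat \<Rightarrow> nat \<Rightarrow> (letter list \<Rightarrow> complex) set" where
  "inv_component n k = {f \<in> homog k. \<forall>g\<in>dihedral n. act g f = f}"

definition inv_dim :: "nat \<Rightarrow> nat \<Rightarrow> nat" where
  "inv_dim n k = vector_space.dim (\<lambda>(c::complex) f w. c * f w) (inv_component n k)"

definition hilbert_series :: "nat \<Rightarrow> real fps" where
  "hilbert_series n = Abs_fps (\<lambda>k. real (inv_dim n k))"

end

(*
  The image of D_{2n} consists of the maps u -> z u, v -> z^-1 v and u -> z v, v -> z^-1 u
  with z = xi^j.  Both kinds act monomially on words, so a degree-k invariant is a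
  function on words of length k that vanishes off the words fixed by rho (those with
  #u = #v mod n) and is invariant under the letter swap induced by tau.  Its dimension is
  the number of swap orbits {w, swap w}: half the number of rho-fixed words, plus 1/2 in
  degree 0, where the empty word is a fixed point.  Averaging the characters
  w -> xi^(j (#u - #v)) over j < n counts the rho-fixed words of length k as
  (1/n) sum_j (xi^j + xi^-j)^k = (1/n) sum_j (2 cos (2 pi j / n))^k, so the Hilbert series
  is 1/2 plus a sum of geometric series; pairing j with n - j gives the stated formulas.
*)
theory Submission
  imports Defs "HOL-Library.Indicator_Function"
begin

lemma letter_UNIV: "(UNIV :: letter set) = {U, V}"
  using letter.exhaust by auto

instance letter :: finite
  by standard (simp add: letter_UNIV)

lemma finite_words_length: "finite {w :: letter list. length w = k}"
  using finite_lists_length_eq[of "UNIV :: letter set" k] by simp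

lemma sum_words_prod_list:
  "(\<Sum>w | length w = k. prod_list (map c w)) = (c U + c V :: 'a :: comm_semiring_1) ^ k"
proof (induction k)
  case 0
  have "{w :: letter list. length w = 0} = {[]}" by auto
  then show ?case by simp
next
  case (Suc k)
  let ?W = "{w :: letter list. length w = k}"
  have words_Suc: "{w :: letter list. length w = Suc k} = (Cons U) ` ?W \<union> (Cons V) ` ?W"
  proof (intro equalityI subsetI)
    fix w :: "letter list"
    assume "w \<in> {w. length w = Suc k}"
    then obtain a w' where "w = a # w'" "length w' = k"
      by (auto simp: length_Suc_conv)
    then show "w \<in> (Cons U) ` ?W \<union> (Cons V) ` ?W"
      by (cases a) auto
  qed auto
  have "(\<Sum>w | length w = Suc k. prod_list (map c w))
      = (\<Sum>w\<in>(Cons U) ` ?W. prod_list (map c w)) + (\<Sum>w\<in>(Cons V) ` ?W. prod_list (map c w))"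
    unfolding words_Suc using finite_words_length[of k] by (intro sum.union_disjoint) auto
  also have "\<dots> = (c U + c V) * (\<Sum>w\<in>?W. prod_list (map c w))"
    by (simp add: sum.reindex sum_distrib_left distrib_right sum.distrib)
  finally show ?case using Suc by simp
qed

lemma prod_list_map_eq_prod_nth: "prod_list (map c w) = (\<Prod>i<length w. c (w ! i))"
  by (induction w) (simp_all add: prod.lessThan_Suc_shift del: prod.lessThan_Suc)

lemma act_monomial:
  assumes M: "\<And>y x. M y x = (if x = \<sigma> y then c y else 0)"
  shows "act M f w = f (map \<sigma> w) * prod_list (map c w)"
proof -
  have "f w' * (\<Prod>i<length w. M (w ! i) (w' ! i))
        = (if w' = map \<sigma> w then f (map \<sigma> w) * prod_list (map c w) else 0)"
    if len: "length w' = length w" for w'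
  proof (cases "w' = map \<sigma> w")
    case True
    then show ?thesis by (simp add: M prod_list_map_eq_prod_nth)
  next
    case False
    then obtain i where "i < length w" "w' ! i \<noteq> \<sigma> (w ! i)"
      using len by (auto simp: list_eq_iff_nth_eq)
    then show ?thesis using False by (auto simp: M intro!: bexI[of _ i])
  qed
  then have "act M f w = (\<Sum>w'\<in>{w'. length w' = length w}.
                 if w' = map \<sigma> w then f (map \<sigma> w) * prod_list (map c w) else 0)"
    unfolding act_def by (intro sum.cong) auto
  also have "\<dots> = f (map \<sigma> w) * prod_list (map c w)"
    using finite_words_length by (simp add: sum.delta')
  finally show ?thesis .
qed

definition swap_letter :: "letter \<Rightarrow> letter" where
  "swap_letter x = (if x = U then V else U)"

definition letter_char :: "complex \<Rightarrow> letter \<Rightarrow> complex" where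
  "letter_char z x = (if x = U then z else inverse z)"

definition word_char :: "complex \<Rightarrow> letter list \<Rightarrow> complex" where
  "word_char z w = prod_list (map (letter_char z) w)"

definition diag_map :: "complex \<Rightarrow> lmap" where
  "diag_map z = (\<lambda>y x. if x = y then letter_char z y else 0)"

definition antidiag_map :: "complex \<Rightarrow> lmap" where
  "antidiag_map z = (\<lambda>y x. if x = swap_letter y then letter_char z y else 0)"

definition xi :: "nat \<Rightarrow> complex" where
  "xi n = cis (2 * pi / real n)"

lemma letter_neq_iff:
  "x \<noteq> U \<longleftrightarrow> x = V" "x \<noteq> V \<longleftrightarrow> x = U" "U \<noteq> x \<longleftrightarrow> x = V" "V \<noteq> x \<longleftrightarrow> x = U"
  by (cases x; simp)+

lemma swap_letter_swap_letter [simp]: "swap_letter (swap_letter x) = x"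
  by (cases x) (simp_all add: swap_letter_def)

lemma swap_letter_comp_swap_letter [simp]: "swap_letter \<circ> swap_letter = id"
  by (simp add: fun_eq_iff)

lemma letter_char_swap_letter: "letter_char z (swap_letter x) = inverse (letter_char z x)"
  by (cases x) (simp_all add: letter_char_def swap_letter_def)

lemma word_char_swap: "word_char z (map swap_letter w) = inverse (word_char z w)"
  by (induction w) (simp_all add: word_char_def letter_char_swap_letter)

lemma word_char_one [simp]: "word_char 1 w = 1"
  by (induction w) (simp_all add: word_char_def letter_char_def)

lemma word_char_power: "word_char (z ^ j) w = word_char z w ^ j"
  by (induction w) (simp_all add: word_char_def letter_char_def power_inverse power_mult_distrib)

lemma xi_power_n: "n \<ge> 1 \<Longrightarrow> xi n ^ n = 1"
  by (simp add: xi_def DeMoivre)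

lemma inverse_xi_power:
  assumes "n \<ge> 1"
  shows "inverse (xi n ^ j) = xi n ^ ((n - 1) * j)"
proof -
  have "xi n ^ ((n - 1) * j) * xi n ^ j = (xi n ^ n) ^ j"
    using assms by (simp flip: power_add power_mult add: algebra_simps)
  then show ?thesis
    using xi_power_n[OF assms] by (simp add: xi_def field_simps)
qed

lemma lid_eq_diag_map: "lid = diag_map 1"
  by (auto simp: lid_def diag_map_def letter_char_def fun_eq_iff)

lemma rho_eq_diag_map: "rho n = diag_map (xi n)"
  by (auto simp: rho_def diag_map_def letter_char_def xi_def fun_eq_iff)

lemma tau_eq_antidiag_map: "tau = antidiag_map 1"
  by (auto simp: tau_def antidiag_map_def letter_char_def swap_letter_def fun_eq_iff
      letter_neq_iff)

lemma mmult_diag_map_diag_map: "mmult (diag_map a) (diag_map b) = diag_map (a * b)"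
  by (auto simp: mmult_def diag_map_def letter_char_def fun_eq_iff letter_neq_iff)

lemma mmult_diag_map_antidiag_map: "mmult (diag_map a) (antidiag_map b) = antidiag_map (a * b)"
  by (auto simp: mmult_def diag_map_def antidiag_map_def letter_char_def swap_letter_def
      fun_eq_iff letter_neq_iff)

lemma mmult_tau_diag_map: "mmult tau (diag_map z) = antidiag_map (inverse z)"
  by (auto simp: mmult_def tau_def diag_map_def antidiag_map_def letter_char_def swap_letter_def
      fun_eq_iff letter_neq_iff)

lemma mmult_tau_antidiag_map: "mmult tau (antidiag_map z) = diag_map (inverse z)"
  by (auto simp: mmult_def tau_def diag_map_def antidiag_map_def letter_char_def swap_letter_def
      fun_eq_iff letter_neq_iff)

lemma dihedral_cases:
  assumes "g \<in> dihedral n" and "n \<ge> 1"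
  obtains j where "g = diag_map (xi n ^ j)" | j where "g = antidiag_map (xi n ^ j)"
proof -
  from assms(1) have "\<exists>j. g = diag_map (xi n ^ j) \<or> g = antidiag_map (xi n ^ j)"
  proof induction
    case one
    show ?case by (auto simp: lid_eq_diag_map intro: exI[of _ 0])
  next
    case (mult_rho g)
    then show ?case
      by (auto simp: rho_eq_diag_map mmult_diag_map_diag_map mmult_diag_map_antidiag_map
          intro: exI[of _ "Suc _"])
  next
    case (mult_tau g)
    then show ?case
      by (auto simp: mmult_tau_diag_map mmult_tau_antidiag_map inverse_xi_power[OF assms(2)]
          intro: exI[of _ "(n - 1) * _"])
  qed
  then show thesis using that by blast
qed

lemma rho_in_dihedral: "rho n \<in> dihedral n"
  using dihedral.mult_rho[OF dihedral.one]
  by (simp add: lid_eq_diag_map rho_eq_diag_map mmult_diag_map_diag_map)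

lemma tau_in_dihedral: "tau \<in> dihedral n"
  using dihedral.mult_tau[OF dihedral.one, of n]
  unfolding lid_eq_diag_map mmult_tau_diag_map by (simp add: tau_eq_antidiag_map)

lemma act_diag_map: "act (diag_map z) f w = f w * word_char z w"
  using act_monomial[of "diag_map z" "\<lambda>y. y" "letter_char z"]
  by (simp add: diag_map_def word_char_def)

lemma act_antidiag_map: "act (antidiag_map z) f w = f (map swap_letter w) * word_char z w"
  using act_monomial[of "antidiag_map z" swap_letter "letter_char z"]
  by (simp add: antidiag_map_def word_char_def)

text \<open>Since \<^term>\<open>word_char (xi n) w\<close> is \<open>xi n\<close> raised to the number of \<open>U\<close>s minus
  the number of \<open>V\<close>s in \<open>w\<close>, these are the words in which both letters occur equally
  often modulo \<open>n\<close>.\<close>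
definition rho_invariant_words :: "nat \<Rightarrow> nat \<Rightarrow> letter list set" where
  "rho_invariant_words n k = {w. length w = k \<and> word_char (xi n) w = 1}"

lemma inv_component_eq:
  assumes "n \<ge> 1"
  shows "inv_component n k =
    {f. (\<forall>w. w \<notin> rho_invariant_words n k \<longrightarrow> f w = 0) \<and> (\<forall>w. f (map swap_letter w) = f w)}"
    (is "_ = ?R")
proof (intro equalityI subsetI)
  fix f
  assume "f \<in> inv_component n k"
  then have "f \<in> homog k" "act (rho n) f = f" "act tau f = f"
    using rho_in_dihedral tau_in_dihedral by (auto simp: inv_component_def)
  moreover have "f w * word_char (xi n) w = f w" for w
    using fun_cong[OF \<open>act (rho n) f = f\<close>, of w] by (simp add: rho_eq_diag_map act_diag_map)
  moreover have "f (map swap_letter w) = f w" for w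
    using fun_cong[OF \<open>act tau f = f\<close>, of w] by (simp add: tau_eq_antidiag_map act_antidiag_map)
  ultimately show "f \<in> ?R"
    by (auto simp: homog_def rho_invariant_words_def)
next
  fix f
  assume f: "f \<in> ?R"
  have fixed: "f w * word_char (xi n) w ^ j = f w" for w j
    using f by (cases "word_char (xi n) w = 1") (auto simp: rho_invariant_words_def)
  have "act g f = f" if "g \<in> dihedral n" for g
    using that \<open>n \<ge> 1\<close>
    by (cases rule: dihedral_cases)
      (use f in \<open>auto simp: act_diag_map act_antidiag_map word_char_power fixed\<close>)
  with f show "f \<in> inv_component n k"
    by (auto simp: inv_component_def homog_def rho_invariant_words_def)
qed

definition pair_orbits :: "('a \<Rightarrow> 'a) \<Rightarrow> 'a set \<Rightarrow> 'a set set" where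
  "pair_orbits \<sigma> S = (\<lambda>x. {x, \<sigma> x}) ` S"

lemma pair_orbits_eq:
  assumes "\<And>x. \<sigma> (\<sigma> x) = x" and "C \<in> pair_orbits \<sigma> S" and "x \<in> C"
  shows "C = {x, \<sigma> x}"
  using assms by (auto simp: pair_orbits_def)

lemma pair_orbits_disjoint:
  assumes "\<And>x. \<sigma> (\<sigma> x) = x" and "C1 \<in> pair_orbits \<sigma> S" and "C2 \<in> pair_orbits \<sigma> S"
    and "C1 \<noteq> C2"
  shows "C1 \<inter> C2 = {}"
  using assms pair_orbits_eq[OF assms(1)] by blast

lemma card_pair_orbits_fixpoint_free:
  assumes "finite S" and invol: "\<And>x. \<sigma> (\<sigma> x) = x" and closed: "\<And>x. x \<in> S \<Longrightarrow> \<sigma> x \<in> S"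
    and no_fix: "\<And>x. x \<in> S \<Longrightarrow> \<sigma> x \<noteq> x"
  shows "2 * card (pair_orbits \<sigma> S) = card S"
proof -
  have "2 * card (pair_orbits \<sigma> S) = card (\<Union> (pair_orbits \<sigma> S))"
  proof (rule card_partition)
    show "card C = 2" if "C \<in> pair_orbits \<sigma> S" for C
      using that no_fix by (force simp: pair_orbits_def card_insert_if)
  qed (use \<open>finite S\<close> pair_orbits_disjoint[OF invol] in \<open>auto simp: pair_orbits_def\<close>)
  also have "\<Union> (pair_orbits \<sigma> S) = S"
    using closed by (auto simp: pair_orbits_def)
  finally show ?thesis .
qed

interpretation fun_vs: vector_space "\<lambda>(c::complex) (f::'a \<Rightarrow> complex) x. c * f x"
  by unfold_locales (auto simp: fun_eq_iff algebra_simps)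

lemma sum_fun_apply: "sum g A x = (\<Sum>a\<in>A. g a x)"
  for g :: "'a \<Rightarrow> 'b \<Rightarrow> 'c :: comm_monoid_add"
  by (induction A rule: infinite_finite_induct) auto

lemma independent_indicators_disjoint:
  fixes \<C> :: "'a set set"
  assumes nonempty: "\<And>C. C \<in> \<C> \<Longrightarrow> C \<noteq> {}"
    and disjoint: "\<And>C1 C2. C1 \<in> \<C> \<Longrightarrow> C2 \<in> \<C> \<Longrightarrow> C1 \<noteq> C2 \<Longrightarrow> C1 \<inter> C2 = {}"
  shows "fun_vs.independent ((\<lambda>C. indicator C :: 'a \<Rightarrow> complex) ` \<C>)"
  unfolding fun_vs.independent_explicit_module
proof (intro allI impI)
  fix t and u :: "('a \<Rightarrow> complex) \<Rightarrow> complex" and v :: "'a \<Rightarrow> complex"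
  assume t: "finite t" "t \<subseteq> (\<lambda>C. indicator C) ` \<C>"
    and comb: "(\<Sum>v\<in>t. (\<lambda>x. u v * v x)) = 0" and "v \<in> t"
  then obtain C x where C: "C \<in> \<C>" "v = indicator C" "x \<in> C"
    using nonempty by blast
  have "0 = (\<Sum>v'\<in>t. u v' * v' x)"
    using fun_cong[OF comb, of x] by (simp add: sum_fun_apply)
  also have "\<dots> = (\<Sum>v'\<in>t. if v' = v then u v else 0)"
  proof (intro sum.cong refl)
    fix v'
    assume "v' \<in> t"
    then obtain C' where C': "C' \<in> \<C>" "v' = indicator C'"
      using t by auto
    show "u v' * v' x = (if v' = v then u v else 0)"
    proof (cases "x \<in> C'")
      case True
      then have "C' = C"
        using C C' disjoint by blast
      then show ?thesis
        using C C' by simp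
    next
      case False
      then have "v' x \<noteq> v x"
        using C C' by simp
      then show ?thesis
        using C' False by auto
    qed
  qed
  also have "\<dots> = u v"
    using t \<open>v \<in> t\<close> by simp
  finally show "u v = 0" by simp
qed

lemma span_indicators_pair_orbits:
  assumes "finite S" and invol: "\<And>x. \<sigma> (\<sigma> x) = x" and closed: "\<And>x. x \<in> S \<Longrightarrow> \<sigma> x \<in> S"
    and f: "\<forall>x. x \<notin> S \<longrightarrow> f x = 0" "\<forall>x. f (\<sigma> x) = f x"
  shows "f \<in> fun_vs.span ((\<lambda>C. indicator C) ` pair_orbits \<sigma> S)"
proof -
  \<comment> \<open>\<open>f\<close> is constant on each orbit, so any point of the orbit gives its coefficient.\<close>
  have "f = (\<Sum>C\<in>pair_orbits \<sigma> S. (\<lambda>x. f (SOME y. y \<in> C) * indicator C x))"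
  proof
    fix x
    show "f x = (\<Sum>C\<in>pair_orbits \<sigma> S. (\<lambda>x. f (SOME y. y \<in> C) * indicator C x)) x"
    proof (cases "x \<in> S")
      case False
      then have "indicator C x = (0 :: complex)" if "C \<in> pair_orbits \<sigma> S" for C
        using that closed by (auto simp: pair_orbits_def indicator_def)
      then show ?thesis
        using f False by (simp add: sum_fun_apply)
    next
      case True
      have "(SOME y. y \<in> {x, \<sigma> x}) \<in> {x, \<sigma> x}"
        by (rule someI[of _ x]) simp
      then have "f (SOME y. y \<in> {x, \<sigma> x}) = f x"
        using f by auto
      then have "f (SOME y. y \<in> C) * indicator C x = (if C = {x, \<sigma> x} then f x else 0)"
        if "C \<in> pair_orbits \<sigma> S" for C
        using pair_orbits_eq[OF invol that, of x] by (cases "x \<in> C") auto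
      then show ?thesis
        using True \<open>finite S\<close> by (simp add: sum_fun_apply pair_orbits_def cong: sum.cong)
    qed
  qed
  also have "\<dots> \<in> fun_vs.span ((\<lambda>C. indicator C) ` pair_orbits \<sigma> S)"
    by (intro fun_vs.span_sum fun_vs.span_scale fun_vs.span_base) auto
  finally show ?thesis .
qed

lemma dim_invariant_functions_involution:
  assumes "finite S" and invol: "\<And>x. \<sigma> (\<sigma> x) = x" and closed: "\<And>x. x \<in> S \<Longrightarrow> \<sigma> x \<in> S"
  shows "vector_space.dim (\<lambda>(c::complex) f x. c * f x)
           {f. (\<forall>x. x \<notin> S \<longrightarrow> f x = 0) \<and> (\<forall>x. f (\<sigma> x) = f x)}
         = card (pair_orbits \<sigma> S)"
proof -
  let ?I = "{f :: 'a \<Rightarrow> complex. (\<forall>x. x \<notin> S \<longrightarrow> f x = 0) \<and> (\<forall>x. f (\<sigma> x) = f x)}"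
  let ?B = "(\<lambda>C. indicator C :: 'a \<Rightarrow> complex) ` pair_orbits \<sigma> S"
  have "?B \<subseteq> ?I"
  proof
    fix f
    assume "f \<in> ?B"
    then obtain x where "x \<in> S" and f: "f = indicator {x, \<sigma> x}"
      by (auto simp: pair_orbits_def)
    moreover have "\<sigma> y \<in> {x, \<sigma> x} \<longleftrightarrow> y \<in> {x, \<sigma> x}" for y
      by (metis insert_iff singletonD invol)
    ultimately show "f \<in> ?I"
      using closed by (auto simp: indicator_def)
  qed
  moreover have "?I \<subseteq> fun_vs.span ?B"
    using span_indicators_pair_orbits[OF assms] by blast
  moreover have "fun_vs.independent ?B"
  proof (rule independent_indicators_disjoint)
    show "C \<noteq> {}" if "C \<in> pair_orbits \<sigma> S" for C
      using that by (auto simp: pair_orbits_def)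
  qed (rule pair_orbits_disjoint[OF invol])
  ultimately have "card ?B = fun_vs.dim ?I"
    by (rule fun_vs.basis_card_eq_dim)
  moreover have "inj_on (\<lambda>C. indicator C :: 'a \<Rightarrow> complex) (pair_orbits \<sigma> S)"
    by (rule inj_onI)
      (metis indicator_eq_0_iff indicator_eq_1_iff subsetI subset_antisym zero_neq_one)
  ultimately show ?thesis
    by (simp add: card_image)
qed

lemma map_swap_letter_neq: "w \<noteq> [] \<Longrightarrow> map swap_letter w \<noteq> w"
  by (cases w) (auto simp: swap_letter_def split: if_splits)

lemma finite_rho_invariant_words: "finite (rho_invariant_words n k)"
  using finite_words_length[of k] by (auto simp: rho_invariant_words_def intro: finite_subset)

lemma swap_rho_invariant_words:
  "w \<in> rho_invariant_words n k \<Longrightarrow> map swap_letter w \<in> rho_invariant_words n k"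
  by (simp add: rho_invariant_words_def word_char_swap)

lemma two_inv_dim:
  assumes "n \<ge> 1"
  shows "2 * inv_dim n k = card (rho_invariant_words n k) + (if k = 0 then 1 else 0)"
proof -
  have "inv_dim n k = card (pair_orbits (map swap_letter) (rho_invariant_words n k))"
    unfolding inv_dim_def inv_component_eq[OF assms]
    by (rule dim_invariant_functions_involution)
      (simp_all add: finite_rho_invariant_words swap_rho_invariant_words)
  moreover have "2 * card (pair_orbits (map swap_letter) (rho_invariant_words n k))
      = card (rho_invariant_words n k)" if "k \<noteq> 0"
  proof (rule card_pair_orbits_fixpoint_free)
    show "map swap_letter w \<noteq> w" if "w \<in> rho_invariant_words n k" for w
      using that \<open>k \<noteq> 0\<close> map_swap_letter_neq by (auto simp: rho_invariant_words_def)
  qed (simp_all add: finite_rho_invariant_words swap_rho_invariant_words)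
  moreover have "rho_invariant_words n 0 = {[]}"
    by (auto simp: rho_invariant_words_def word_char_def)
  ultimately show ?thesis
    by (cases "k = 0") (auto simp: pair_orbits_def)
qed

lemma sum_powers_root_of_unity:
  fixes c :: "'a :: field"
  assumes "c ^ n = 1"
  shows "(\<Sum>j<n. c ^ j) = (if c = 1 then of_nat n else 0)"
  using assms by (simp add: sum_gp_strict)

lemma xi_power_plus_inverse:
  "xi n ^ j + inverse (xi n ^ j) = complex_of_real (2 * cos (2 * real j * pi / real n))"
proof -
  have "xi n ^ j = cis (2 * real j * pi / real n)"
    by (simp add: xi_def DeMoivre field_simps)
  then show ?thesis
    by (simp add: complex_eq_iff)
qed

lemma card_rho_invariant_words:
  assumes "n \<ge> 1"
  shows "real (card (rho_invariant_words n k)) * real n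
    = (\<Sum>j<n. (2 * cos (2 * real j * pi / real n)) ^ k)"
proof -
  let ?W = "{w :: letter list. length w = k}"
  have "complex_of_real (real (card (rho_invariant_words n k)) * real n)
      = (\<Sum>w\<in>rho_invariant_words n k. of_nat n)"
    by simp
  also have "\<dots> = (\<Sum>w\<in>?W. if word_char (xi n) w = 1 then of_nat n else 0)"
    using sum.inter_filter[OF finite_words_length[of k],
        of "\<lambda>_. of_nat n" "\<lambda>w. word_char (xi n) w = 1"]
    by (simp add: rho_invariant_words_def)
  also have "\<dots> = (\<Sum>w\<in>?W. \<Sum>j<n. word_char (xi n) w ^ j)"
  proof (intro sum.cong refl sum_powers_root_of_unity[symmetric])
    show "word_char (xi n) w ^ n = 1" for w
      by (simp add: xi_power_n[OF assms] flip: word_char_power)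
  qed
  also have "\<dots> = (\<Sum>j<n. \<Sum>w\<in>?W. word_char (xi n ^ j) w)"
    by (subst sum.swap) (simp add: word_char_power)
  also have "\<dots> = (\<Sum>j<n. (xi n ^ j + inverse (xi n ^ j)) ^ k)"
    by (simp add: word_char_def sum_words_prod_list letter_char_def)
  also have "\<dots> = complex_of_real (\<Sum>j<n. (2 * cos (2 * real j * pi / real n)) ^ k)"
    by (simp add: xi_power_plus_inverse)
  finally show ?thesis
    by (simp only: of_real_eq_iff)
qed

lemma inv_dim_formula:
  assumes "n \<ge> 1"
  shows "real (inv_dim n k) = (\<Sum>j<n. (2 * cos (2 * real j * pi / real n)) ^ k) / (2 * real n)
           + (if k = 0 then 1 / 2 else 0)"
proof -
  have "2 * real (inv_dim n k) = real (card (rho_invariant_words n k)) + (if k = 0 then 1 else 0)"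
    using arg_cong[OF two_inv_dim[OF assms, of k], of real] by simp
  then show ?thesis
    using card_rho_invariant_words[OF assms, of k] assms by (simp add: field_simps)
qed

lemma fps_nth_inverse_one_minus_const_X:
  "fps_nth (inverse (1 - fps_const c * fps_X)) k = (c :: 'a :: field_char_0) ^ k"
  using one_minus_const_fps_X_neg_power'[of 1 c] by simp

lemma inverse_fps_const_mult:
  "inverse (fps_const c * f) = fps_const (1 / c) * inverse (f :: 'a :: field fps)"
  by (simp add: fps_inverse_mult fps_const_inverse divide_inverse)

definition cos_geometric_series :: "nat \<Rightarrow> nat \<Rightarrow> real fps" where
  "cos_geometric_series n j = inverse (1 - fps_const (2 * cos (2 * real j * pi / real n)) * fps_X)"

lemma cos_geometric_series_0: "cos_geometric_series n 0 = inverse (1 - 2 * fps_X)"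
  by (simp add: cos_geometric_series_def numeral_fps_const)

lemma cos_geometric_series_half:
  assumes "n = 2 * h" and "h > 0"
  shows "cos_geometric_series n h = inverse (1 + 2 * fps_X)"
proof -
  have "2 * real h * pi / real n = pi"
    using assms by (simp add: field_simps)
  then show ?thesis
    by (simp add: cos_geometric_series_def numeral_fps_const flip: fps_const_neg)
qed

lemma cos_geometric_series_reflect:
  assumes "0 < j" and "j < n"
  shows "cos_geometric_series n (n - j) = cos_geometric_series n j"
proof -
  have "2 * real (n - j) * pi / real n = 2 * pi - 2 * real j * pi / real n"
    using assms by (simp add: of_nat_diff field_simps)
  then show ?thesis
    by (simp add: cos_geometric_series_def)
qed

lemma hilbert_series_eq_sum_cos_geometric_series:
  assumes "n \<ge> 1"
  shows "hilbert_series n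
    = fps_const (1 / 2) + fps_const (1 / (2 * real n)) * (\<Sum>j<n. cos_geometric_series n j)"
  by (rule fps_ext)
    (simp add: hilbert_series_def inv_dim_formula[OF assms] fps_sum_nth cos_geometric_series_def
      fps_nth_inverse_one_minus_const_X)

lemma sum_lessThan_symmetric_odd:
  fixes F :: "nat \<Rightarrow> 'a :: comm_semiring_1"
  assumes n: "n = 2 * m + 1" and sym: "\<And>j. 0 < j \<Longrightarrow> j < n \<Longrightarrow> F (n - j) = F j"
  shows "(\<Sum>j<n. F j) = F 0 + 2 * (\<Sum>j=1..m. F j)"
proof -
  have "{..<n} = insert 0 ({1..m} \<union> {m+1..2*m})"
    using n by auto
  then have "(\<Sum>j<n. F j) = F 0 + (\<Sum>j=1..m. F j) + (\<Sum>j=m+1..2*m. F j)"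
    by (simp add: sum.union_disjoint add.assoc)
  also have "(\<Sum>j=m+1..2*m. F j) = (\<Sum>j=1..m. F (n - j))"
    by (rule sum.reindex_bij_witness[of _ "\<lambda>j. n - j" "\<lambda>j. n - j"]) (use n in auto)
  also have "\<dots> = (\<Sum>j=1..m. F j)"
    using n by (intro sum.cong refl sym) auto
  finally show ?thesis
    by (simp add: mult_2 add.assoc)
qed

lemma sum_lessThan_symmetric_even:
  fixes F :: "nat \<Rightarrow> 'a :: comm_semiring_1"
  assumes n: "n = 2 * m + 2" and sym: "\<And>j. 0 < j \<Longrightarrow> j < n \<Longrightarrow> F (n - j) = F j"
  shows "(\<Sum>j<n. F j) = F 0 + F (m + 1) + 2 * (\<Sum>j=1..m. F j)"
proof -
  have "{..<n} = insert 0 (insert (m+1) ({1..m} \<union> {m+2..2*m+1}))"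
    using n by auto
  then have "(\<Sum>j<n. F j) = F 0 + F (m + 1) + (\<Sum>j=1..m. F j) + (\<Sum>j=m+2..2*m+1. F j)"
    by (simp add: sum.union_disjoint add.assoc)
  also have "(\<Sum>j=m+2..2*m+1. F j) = (\<Sum>j=1..m. F (n - j))"
    by (rule sum.reindex_bij_witness[of _ "\<lambda>j. n - j" "\<lambda>j. n - j"]) (use n in auto)
  also have "\<dots> = (\<Sum>j=1..m. F j)"
    using n by (intro sum.cong refl sym) auto
  finally show ?thesis
    by (simp add: mult_2 add.assoc)
qed

lemma fps_const_mult_double:
  "fps_const c * (2 * f) = fps_const (2 * c) * (f :: 'a :: comm_ring_1 fps)"
  by (simp add: numeral_fps_const mult.assoc[symmetric] mult.commute[of 2])

lemma hilbert_series_odd: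
  assumes "n = 2 * m + 1"
  shows "hilbert_series n = fps_const (1 / 2) + inverse (fps_const (2 * real n) * (1 - 2 * fps_X))
           + fps_const (1 / real n) * (\<Sum>k=1..m. cos_geometric_series n k)"
proof -
  have "(\<Sum>j<n. cos_geometric_series n j)
      = cos_geometric_series n 0 + 2 * (\<Sum>k=1..m. cos_geometric_series n k)"
    by (rule sum_lessThan_symmetric_odd[OF assms]) (rule cos_geometric_series_reflect)
  moreover have "n \<ge> 1"
    using assms by simp
  ultimately have "hilbert_series n = fps_const (1 / 2) + fps_const (1 / (2 * real n)) *
      (cos_geometric_series n 0 + 2 * (\<Sum>k=1..m. cos_geometric_series n k))"
    using hilbert_series_eq_sum_cos_geometric_series by simp
  then show ?thesis
    unfolding inverse_fps_const_mult
    by (simp add: distrib_left fps_const_mult_double cos_geometric_series_0)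
qed

lemma hilbert_series_even:
  assumes "n = 2 * m + 2"
  shows "hilbert_series n = fps_const (1 / 2) + inverse (fps_const (2 * real n) * (1 - 2 * fps_X))
           + inverse (fps_const (2 * real n) * (1 + 2 * fps_X))
           + fps_const (1 / real n) * (\<Sum>k=1..m. cos_geometric_series n k)"
proof -
  have "(\<Sum>j<n. cos_geometric_series n j) = cos_geometric_series n 0
      + cos_geometric_series n (m + 1) + 2 * (\<Sum>k=1..m. cos_geometric_series n k)"
    by (rule sum_lessThan_symmetric_even[OF assms]) (rule cos_geometric_series_reflect)
  moreover have "n \<ge> 1"
    using assms by simp
  ultimately have "hilbert_series n = fps_const (1 / 2) + fps_const (1 / (2 * real n)) *
      (cos_geometric_series n 0 + cos_geometric_series n (m + 1)
        + 2 * (\<Sum>k=1..m. cos_geometric_series n k))"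
    using hilbert_series_eq_sum_cos_geometric_series by simp
  moreover have "cos_geometric_series n (m + 1) = inverse (1 + 2 * fps_X)"
    using assms by (intro cos_geometric_series_half) auto
  ultimately show ?thesis
    unfolding inverse_fps_const_mult
    by (simp add: distrib_left fps_const_mult_double cos_geometric_series_0 add.assoc)
qed

theorem mainTheorem1:
  fixes n m :: nat
  assumes "n \<ge> 3" and "m \<ge> 1"
  shows "(n = 2 * m + 1 \<longrightarrow>
           hilbert_series n =
             fps_const (1/2) + inverse (fps_const (2 * real n) * (1 - 2 * fps_X))
             + fps_const (1 / real n) *
               (\<Sum>k=1..m. inverse (1 - fps_const (2 * cos (2 * real k * pi / real n)) * fps_X)))
       \<and> (n = 2 * m + 2 \<longrightarrow>
           hilbert_series n =
             fps_const (1/2) + inverse (fps_const (2 * real n) * (1 - 2 * fps_X))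
             + inverse (fps_const (2 * real n) * (1 + 2 * fps_X))
             + fps_const (1 / real n) *
               (\<Sum>k=1..m. inverse (1 - fps_const (2 * cos (2 * real k * pi / real n)) * fps_X)))"
  using hilbert_series_odd[of n m] hilbert_series_even[of n m]
  unfolding cos_geometric_series_def by blast

end
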